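(* Let $\Delta>0$ and $p>0$. Suppose the times at which a web page changes form a time-homogeneous Poisson point process on $[0,\infty)$ with rate $\Delta$, and, independently, the page is accessed at times $0=t_0<t_1<t_2<\cdots$ where $\{t_k-t_{k-1}\}_{k\ge1}$ are i.i.d. exponential random variables with rate $p$. For $k\ge 1$ let $I_k=1$ if the page changed at least once in $(t_{k-1},t_k]$ and $I_k=0$ otherwise, and let $\hat I_k=\sum_{j=1}^k I_j$. Let $\{\alpha_k\}_{k\ge1}$ be a sequence of positive reals and define \[ x_k = \frac{p\,\hat I_k}{k+\alpha_k-\hat I_k},\qquad k\ge 1. \] Then: 1. If $\lim_{k\to\infty}\alpha_k/k=0$, then $\lim_{k\to\infty}x_k=\Delta$ almost surely. 2. If, in addition, $\lim_{k\to\infty}\log(k/\alpha_k)/k=0$, then \[ \mathbb{E}|x_k-\Delta| = O\left(\max\left\{k^{-1/2},\ \alpha_k/k\right\}\right). \]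
   Context: Here $\Delta$ is unknown (to be estimated) and $p$ is known; $x_k$ is called the LLN estimator. *)

theory Defs
  imports "HOL-Probability.Probability" "HOL-Library.Landau_Symbols"
begin

text \<open>The rate-Delta homogeneous Poisson point process of page changes is
represented by its i.i.d. Exp(Delta) inter-arrival times G 0, G 1, ...;
the n-th change (n = 0,1,...) occurs at time G 0 + ... + G n.
The access times are t_0 = 0 and t_k = A 0 + ... + A (k-1),
with A i i.i.d. Exp(p).\<close>

definition change_time :: "(nat \<Rightarrow> 'a \<Rightarrow> real) \<Rightarrow> nat \<Rightarrow> 'a \<Rightarrow> real" where
  "change_time G n \<omega> = (\<Sum>i\<le>n. G i \<omega>)"

definition access_time :: "(nat \<Rightarrow> 'a \<Rightarrow> real) \<Rightarrow> nat \<Rightarrow> 'a \<Rightarrow> real" where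
  "access_time A k \<omega> = (\<Sum>i<k. A i \<omega>)"

definition change_ind ::
  "(nat \<Rightarrow> 'a \<Rightarrow> real) \<Rightarrow> (nat \<Rightarrow> 'a \<Rightarrow> real) \<Rightarrow> nat \<Rightarrow> 'a \<Rightarrow> real" where
  "change_ind G A k \<omega> =
     (if \<exists>n. access_time A (k - 1) \<omega> < change_time G n \<omega> \<and> change_time G n \<omega> \<le> access_time A k \<omega>
      then 1 else 0)"

definition change_count ::
  "(nat \<Rightarrow> 'a \<Rightarrow> real) \<Rightarrow> (nat \<Rightarrow> 'a \<Rightarrow> real) \<Rightarrow> nat \<Rightarrow> 'a \<Rightarrow> real" where
  "change_count G A k \<omega> = (\<Sum>j=1..k. change_ind G A j \<omega>)"

definition lln_est ::
  "real \<Rightarrow> (nat \<Rightarrow> real) \<Rightarrow> (nat \<Rightarrow> 'a \<Rightarrow> real) \<Rightarrow> (nat \<Rightarrow> 'a \<Rightarrow> real) \<Rightarrow> nat \<Rightarrow> 'a \<Rightarrow> real" where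
  "lln_est p \<alpha> G A k \<omega> =
     p * change_count G A k \<omega> / (real k + \<alpha> k - change_count G A k \<omega>)"

end

(* The change times form a renewal process with Exp(Delta) gaps. By memorylessness, such a process
   avoids disjoint intervals of total length L with probability exp (-Delta L). Conditioning on the
   independent Exp(p) access gaps and taking their Laplace transforms gives
   P(I_j = 0 for all j in J) = (p / (p + Delta))^|J|, so the I_k are i.i.d. Bernoulli(q) with
   q = Delta / (p + Delta), i.e. Delta = p q / (1 - q).

   With u_k = hat I_k / k the estimator is x_k = p u_k / (1 + alpha_k / k - u_k), so part 1 is the
   strong law of large numbers (Hoeffding plus Borel-Cantelli). For part 2, where
   |u_k - q| < (1 - q) / 2 the estimator is a Lipschitz function of u_k and alpha_k / k, and
   E |u_k - q| <= k^(-1/2) by the second moment; elsewhere x_k <= p k / alpha_k, and this event has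
   probability at most 2 exp (-(1 - q)^2 k / 2) by Hoeffding, which the hypothesis on
   log (k / alpha_k) / k makes negligible. *)

theory Submission
  imports Defs "HOL-Real_Asymp.Real_Asymp"
begin

section \<open>Independence and conditioning\<close>

lemma (in prob_space) indep_vars_reindex:
  assumes indep: "indep_vars M' X I" and inj: "inj_on f J" and sub: "f ` J \<subseteq> I"
  shows "indep_vars (\<lambda>j. M' (f j)) (\<lambda>j. X (f j)) J"
proof -
  have rv: "\<forall>i\<in>I. random_variable (M' i) (X i)"
   and sets: "indep_sets (\<lambda>i. {X i -` A \<inter> space M | A. A \<in> sets (M' i)}) I"
    using indep unfolding indep_vars_def2 by auto
  show ?thesis unfolding indep_vars_def2
  proof (intro conjI ballI)
    fix j assume "j \<in> J" then show "random_variable (M' (f j)) (X (f j))" using rv sub by auto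
  next
    show "indep_sets (\<lambda>j. {X (f j) -` A \<inter> space M | A. A \<in> sets (M' (f j))}) J"
    proof (rule indep_setsI)
      fix j assume "j \<in> J"
      then show "{X (f j) -` A \<inter> space M | A. A \<in> sets (M' (f j))} \<subseteq> events"
        using sets sub unfolding indep_sets_def by auto
    next
      fix B K assume K: "K \<noteq> {}" "K \<subseteq> J" "finite K"
        and B: "\<forall>j\<in>K. B j \<in> {X (f j) -` A \<inter> space M | A. A \<in> sets (M' (f j))}"
      define C where "C i = B (inv_into K f i)" for i
      have inj_K: "inj_on f K" using inj K by (meson inj_on_subset)
      have C_f: "C (f j) = B j" if "j \<in> K" for j
        using inj_K that by (simp add: C_def)
      have "prob (\<Inter>i\<in>f`K. C i) = (\<Prod>i\<in>f`K. prob (C i))"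
        by (rule indep_setsD[OF sets]) (use K sub B C_f in auto)
      moreover have "(\<Inter>i\<in>f`K. C i) = (\<Inter>j\<in>K. B j)" using C_f by auto
      moreover have "(\<Prod>i\<in>f`K. prob (C i)) = (\<Prod>j\<in>K. prob (B j))"
        using prod.reindex[OF inj_K, of "\<lambda>i. prob (C i)"] C_f by (simp cong: prod.cong)
      ultimately show "prob (\<Inter>j\<in>K. B j) = (\<Prod>j\<in>K. prob (B j))" by simp
    qed
  qed
qed

lemma (in prob_space) indep_var_commute:
  assumes "indep_var S X T Y" shows "indep_var T Y S X"
proof -
  have "indep_vars (\<lambda>j. case_bool S T (\<not> j)) (\<lambda>j. case_bool X Y (\<not> j)) UNIV"
    using assms unfolding indep_var_def by (rule indep_vars_reindex) (auto simp: inj_def)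
  moreover have "(\<lambda>j. case_bool S T (\<not> j)) = case_bool T S" "(\<lambda>j. case_bool X Y (\<not> j)) = case_bool Y X"
    by (auto simp: fun_eq_iff split: bool.split)
  ultimately show ?thesis unfolding indep_var_def by simp
qed

lemma (in prob_space) indep_vars_cong_space:
  assumes "indep_vars M' X I" and "\<And>i \<omega>. i \<in> I \<Longrightarrow> \<omega> \<in> space M \<Longrightarrow> X i \<omega> = Y i \<omega>"
  shows "indep_vars M' Y I"
proof -
  have vimage_eq: "X i -` B \<inter> space M = Y i -` B \<inter> space M" if "i \<in> I" for i B
    using assms(2)[OF that] by auto
  have "random_variable (M' i) (Y i)" if "i \<in> I" for i
  proof -
    have "random_variable (M' i) (X i)" using assms(1) that by (auto simp: indep_vars_def)
    then show ?thesis by (rule measurable_cong[THEN iffD1, rotated]) (use assms(2)[OF that] in auto)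
  qed
  moreover have "indep_sets (\<lambda>i. {Y i -` B \<inter> space M | B. B \<in> sets (M' i)}) I"
    using assms(1) vimage_eq unfolding indep_vars_def2 by (auto cong: indep_sets_cong)
  ultimately show ?thesis by (auto simp: indep_vars_def2)
qed

lemma (in prob_space) indep_vars_indicator:
  assumes "indep_events E I"
  shows "indep_vars (\<lambda>_. borel) (\<lambda>i \<omega>. indicator (E i) \<omega> :: real) I"
proof -
  have E: "E i \<in> events" if "i \<in> I" for i using assms that by (auto simp: indep_events_def)
  have indep: "indep_sets (\<lambda>i. sigma_sets (space M) {E i}) I"
    using assms unfolding indep_events_def_alt by (rule indep_sets_sigma) (auto simp: Int_stable_def)
  have vimage_indicator: "(\<lambda>\<omega>. indicator (E i) \<omega> :: real) -` B \<inter> space M \<in> sigma_sets (space M) {E i}"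
    if "i \<in> I" for i and B :: "real set"
  proof -
    have "(\<lambda>\<omega>. indicator (E i) \<omega> :: real) -` B \<inter> space M =
        (if 1 \<in> B then E i else {}) \<union> (if 0 \<in> B then space M - E i else {})"
      using sets.sets_into_space[OF E[OF that]] by (auto simp: indicator_def of_bool_def split: if_splits)
    also have "\<dots> \<in> sigma_sets (space M) {E i}"
      by (intro sigma_sets_Un) (auto intro: sigma_sets.Empty sigma_sets.Compl)
    finally show ?thesis .
  qed
  show ?thesis unfolding indep_vars_def
  proof (intro conjI ballI)
    fix i assume "i \<in> I"
    then show "random_variable borel (\<lambda>\<omega>. indicator (E i) \<omega> :: real)"
      using E by measurable
  next
    show "indep_sets (\<lambda>i. sigma_sets (space M)
        {(\<lambda>\<omega>. indicator (E i) \<omega> :: real) -` B \<inter> space M |B. B \<in> sets borel}) I"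
      using vimage_indicator
      by (intro indep_sets_mono_sets[OF indep] sigma_sets_mono)
        (auto simp: sigma_sets_sigma_sets_eq)
  qed
qed

lemma (in prob_space) emeasure_distr_Pair_vimage:
  assumes [measurable]: "Y \<in> measurable M T"
    and R[measurable]: "Measurable.pred (S \<Otimes>\<^sub>M T) (\<lambda>z. R (fst z) (snd z))"
    and x: "x \<in> space S"
  shows "emeasure (distr M T Y) (Pair x -` {z\<in>space (S \<Otimes>\<^sub>M T). R (fst z) (snd z)})
    = prob {\<omega>\<in>space M. R x (Y \<omega>)}"
proof -
  have [measurable]: "Measurable.pred T (R x)"
    using measurable_Pair2[OF R x] by simp
  have "Pair x -` {z\<in>space (S \<Otimes>\<^sub>M T). R (fst z) (snd z)} = {y\<in>space T. R x y}"
    using x by (auto simp: space_pair_measure)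
  moreover have "Y -` {y\<in>space T. R x y} \<inter> space M = {\<omega>\<in>space M. R x (Y \<omega>)}"
    using measurable_space[OF assms(1)] by auto
  ultimately show ?thesis by (simp add: emeasure_distr emeasure_eq_measure)
qed

lemma (in prob_space) borel_measurable_prob_section:
  assumes [measurable]: "Y \<in> measurable M T"
    and [measurable]: "Measurable.pred (S \<Otimes>\<^sub>M T) (\<lambda>z. R (fst z) (snd z))"
  shows "(\<lambda>x. prob {\<omega>\<in>space M. R x (Y \<omega>)}) \<in> borel_measurable S"
proof -
  interpret Y: prob_space "distr M T Y" by (rule prob_space_distr) simp
  let ?R = "{z\<in>space (S \<Otimes>\<^sub>M T). R (fst z) (snd z)}"
  have "?R \<in> sets (S \<Otimes>\<^sub>M distr M T Y)"
    by (simp cong: sets_pair_measure_cong)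
  then have "(\<lambda>x. enn2real (emeasure (distr M T Y) (Pair x -` ?R))) \<in> borel_measurable S"
    using Y.measurable_emeasure_Pair by measurable
  then show ?thesis
  proof (rule measurable_cong[THEN iffD1, rotated])
    fix x assume "x \<in> space S"
    then show "enn2real (emeasure (distr M T Y) (Pair x -` ?R)) = prob {\<omega>\<in>space M. R x (Y \<omega>)}"
      by (subst emeasure_distr_Pair_vimage[OF assms]) simp_all
  qed
qed

lemma (in prob_space) prob_indep_var_eq_integral:
  assumes indep: "indep_var S X T Y"
    and R[measurable]: "Measurable.pred (S \<Otimes>\<^sub>M T) (\<lambda>z. R (fst z) (snd z))"
  shows "prob {\<omega>\<in>space M. R (X \<omega>) (Y \<omega>)} = (\<integral>x. prob {\<omega>\<in>space M. R x (Y \<omega>)} \<partial>distr M S X)"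
proof -
  have [measurable]: "X \<in> measurable M S" and Y[measurable]: "Y \<in> measurable M T"
    using indep by (auto dest: indep_var_rv1 indep_var_rv2)
  interpret X: prob_space "distr M S X" by (rule prob_space_distr) simp
  interpret Y: prob_space "distr M T Y" by (rule prob_space_distr) simp
  let ?R = "{z\<in>space (S \<Otimes>\<^sub>M T). R (fst z) (snd z)}"
  have "ennreal (prob {\<omega>\<in>space M. R (X \<omega>) (Y \<omega>)}) = emeasure M ((\<lambda>\<omega>. (X \<omega>, Y \<omega>)) -` ?R \<inter> space M)"
    using measurable_space[of X M S] measurable_space[of Y M T]
    by (auto simp: emeasure_eq_measure space_pair_measure intro!: arg_cong[where f=prob])
  also have "\<dots> = emeasure (distr M (S \<Otimes>\<^sub>M T) (\<lambda>\<omega>. (X \<omega>, Y \<omega>))) ?R"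
    by (rule emeasure_distr[symmetric]) auto
  also have "\<dots> = emeasure (distr M S X \<Otimes>\<^sub>M distr M T Y) ?R"
    using indep by (simp add: indep_var_distribution_eq)
  also have "\<dots> = (\<integral>\<^sup>+x. emeasure (distr M T Y) (Pair x -` ?R) \<partial>distr M S X)"
    by (rule Y.emeasure_pair_measure_alt) (simp cong: sets_pair_measure_cong)
  also have "\<dots> = (\<integral>\<^sup>+x. ennreal (prob {\<omega>\<in>space M. R x (Y \<omega>)}) \<partial>distr M S X)"
    by (intro nn_integral_cong emeasure_distr_Pair_vimage[OF Y R]) simp
  also have "\<dots> = ennreal (\<integral>x. prob {\<omega>\<in>space M. R x (Y \<omega>)} \<partial>distr M S X)"
    by (intro nn_integral_eq_integral X.integrable_const_bound[where B=1])
      (auto intro: borel_measurable_prob_section[OF Y R])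
  finally show ?thesis by (simp add: ennreal_inj)
qed

lemma (in prob_space) indep_var_prefix_suffix:
  fixes g :: "nat \<Rightarrow> 'a \<Rightarrow> 'b"
  assumes "indep_vars (\<lambda>_. N) g UNIV"
  shows "indep_var (PiM {..<n} (\<lambda>_. N)) (\<lambda>\<omega>. restrict (\<lambda>i. g i \<omega>) {..<n})
    (PiM UNIV (\<lambda>_. N)) (\<lambda>\<omega> i. g (n + i) \<omega>)"
proof -
  have "indep_var (PiM {..<n} (\<lambda>_. N)) (\<lambda>\<omega>. restrict (\<lambda>i. g i \<omega>) {..<n})
      (PiM {n..} (\<lambda>_. N)) (\<lambda>\<omega>. restrict (\<lambda>i. g i \<omega>) {n..})"
    by (rule indep_var_restrict[OF assms]) auto
  moreover have "(\<lambda>f i. f (n + i)) \<in> measurable (PiM {n..} (\<lambda>_. N)) (PiM UNIV (\<lambda>_. N))"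
    by (rule measurable_PiM_single') (auto intro!: measurable_component_singleton simp: space_PiM)
  ultimately have "indep_var (PiM {..<n} (\<lambda>_. N)) (id \<circ> (\<lambda>\<omega>. restrict (\<lambda>i. g i \<omega>) {..<n}))
      (PiM UNIV (\<lambda>_. N)) ((\<lambda>f i. f (n + i)) \<circ> (\<lambda>\<omega>. restrict (\<lambda>i. g i \<omega>) {n..}))"
    by (intro indep_var_compose) auto
  then show ?thesis by (simp add: comp_def)
qed

section \<open>Exponential distributions\<close>

lemma integral_exponential_density:
  assumes "l > 0" shows "(\<integral>x. exponential_density l x \<partial>lborel) = 1"
proof -
  interpret prob_space "density lborel (exponential_density l)"
    by (rule prob_space_exponential_density[OF assms])
  show ?thesis
    using integral_density[of "\<lambda>_. 1::real" lborel "exponential_density l"] prob_space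
    by (simp add: exponential_density_nonneg[OF assms])
qed

lemma (in prob_space) exponential_distributed_laplace:
  assumes D: "distributed M lborel X (exponential_density l)" and l: "l > 0" and d: "d \<ge> 0"
  shows "expectation (\<lambda>\<omega>. exp (- d * X \<omega>)) = l / (l + d)"
proof -
  have "expectation (\<lambda>\<omega>. exp (- d * X \<omega>))
      = (\<integral>x. exponential_density l x * exp (- d * x) \<partial>lborel)"
    by (rule distributed_integral[OF D, symmetric]) (auto simp: exponential_density_nonneg[OF l])
  also have "\<dots> = (\<integral>x. l / (l + d) * exponential_density (l + d) x \<partial>lborel)"
    using l d by (intro Bochner_Integration.integral_cong)
      (auto simp: exponential_density_def exp_add[symmetric] field_simps)
  also have "\<dots> = l / (l + d)"
    using integral_exponential_density[of "l + d"] l d by simp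
  finally show ?thesis .
qed

lemma (in prob_space) exponential_distributed_shift:
  assumes D: "distributed M lborel Y (exponential_density l)" and l: "l > 0" and c: "c \<ge> 0"
    and [measurable]: "Measurable.pred borel P"
  shows "prob {\<omega>\<in>space M. c < Y \<omega> \<and> P (Y \<omega> - c)} = exp (- l * c) * prob {\<omega>\<in>space M. P (Y \<omega>)}"
proof -
  let ?f = "exponential_density l"
  have prob_eq: "ennreal (prob {\<omega>\<in>space M. Q (Y \<omega>)})
      = (\<integral>\<^sup>+y. ennreal (?f y) * indicator {y. Q y} y \<partial>lborel)"
    if [measurable]: "Measurable.pred borel Q" for Q
  proof -
    have Q_sets: "{y. Q y} \<in> sets lborel" by simp
    have "{\<omega>\<in>space M. Q (Y \<omega>)} = Y -` {y. Q y} \<inter> space M" by auto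
    then show ?thesis using distributed_emeasure[OF D Q_sets] by (simp add: emeasure_eq_measure)
  qed
  have "ennreal (prob {\<omega>\<in>space M. c < Y \<omega> \<and> P (Y \<omega> - c)})
      = (\<integral>\<^sup>+y. ennreal (?f y) * indicator {y. c < y \<and> P (y - c)} y \<partial>lborel)"
    by (rule prob_eq) measurable
  also have "\<dots> = (\<integral>\<^sup>+r. ennreal (?f (c + 1 * r)) * indicator {y. c < y \<and> P (y - c)} (c + 1 * r) \<partial>lborel)"
    by (subst nn_integral_real_affine[where c=1 and t=c]) auto
  also have "\<dots> = (\<integral>\<^sup>+r. ennreal (exp (- l * c)) * (ennreal (?f r) * indicator {y. P y} r) \<partial>lborel)"
  proof (rule nn_integral_cong_AE)
    show "AE r in lborel. ennreal (?f (c + 1 * r)) * indicator {y. c < y \<and> P (y - c)} (c + 1 * r)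
        = ennreal (exp (- l * c)) * (ennreal (?f r) * indicator {y. P y} r)"
      using AE_lborel_singleton[of 0]
    proof eventually_elim
      case (elim r)
      then consider "r > 0" | "r < 0" by linarith
      then show ?case
      proof cases
        case 1
        then have "?f (c + 1 * r) = exp (- l * c) * ?f r"
          using c by (simp add: exponential_density_def exp_add[symmetric] algebra_simps)
        then show ?thesis using 1 l by (simp add: indicator_def ennreal_mult exponential_density_nonneg)
      qed (simp add: exponential_density_def indicator_def)
    qed
  qed
  also have "\<dots> = exp (- l * c) * ennreal (prob {\<omega>\<in>space M. P (Y \<omega>)})"
    by (simp add: nn_integral_cmult prob_eq)
  finally show ?thesis by (simp add: ennreal_inj ennreal_mult[symmetric])
qed

lemma (in prob_space) exponential_distributed_shift_indep:
  assumes indep: "indep_var S X T Z" and [measurable]: "h \<in> borel_measurable S"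
    and D: "distributed M lborel (\<lambda>\<omega>. h (X \<omega>)) (exponential_density l)"
    and l: "l > 0" and c: "c \<ge> 0"
    and Q[measurable]: "Measurable.pred (borel \<Otimes>\<^sub>M T) (\<lambda>z. Q (fst z) (snd z))"
  shows "prob {\<omega>\<in>space M. c < h (X \<omega>) \<and> Q (h (X \<omega>) - c) (Z \<omega>)}
    = exp (- l * c) * prob {\<omega>\<in>space M. Q (h (X \<omega>)) (Z \<omega>)}"
proof -
  have indep': "indep_var T Z S X" by (rule indep_var_commute[OF indep])
  have [measurable]: "Measurable.pred borel (\<lambda>y. Q y z)" if "z \<in> space T" for z
    using measurable_Pair1[OF Q that] by simp
  have [measurable]: "Measurable.pred (T \<Otimes>\<^sub>M S) (\<lambda>z. Q (f (h (snd z))) (fst z))"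
    if [measurable]: "f \<in> borel_measurable borel" for f
  proof -
    have "(\<lambda>z. (f (h (snd z)), fst z)) \<in> measurable (T \<Otimes>\<^sub>M S) (borel \<Otimes>\<^sub>M T)" by measurable
    from measurable_compose[OF this Q] show ?thesis by simp
  qed
  have "prob {\<omega>\<in>space M. c < h (X \<omega>) \<and> Q (h (X \<omega>) - c) (Z \<omega>)}
      = (\<integral>z. prob {\<omega>\<in>space M. c < h (X \<omega>) \<and> Q (h (X \<omega>) - c) z} \<partial>distr M T Z)"
    using prob_indep_var_eq_integral[OF indep', of "\<lambda>z x. c < h x \<and> Q (h x - c) z"] by simp
  also have "\<dots> = (\<integral>z. exp (- l * c) * prob {\<omega>\<in>space M. Q (h (X \<omega>)) z} \<partial>distr M T Z)"
    by (intro Bochner_Integration.integral_cong exponential_distributed_shift[OF D l c]) auto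
  also have "\<dots> = exp (- l * c) * prob {\<omega>\<in>space M. Q (h (X \<omega>)) (Z \<omega>)}"
    using prob_indep_var_eq_integral[OF indep', of "\<lambda>z x. Q (h x) z"] by simp
  finally show ?thesis .
qed

section \<open>Void probabilities of a renewal process with exponential gaps\<close>

definition avoids :: "(real \<times> real) list \<Rightarrow> real \<Rightarrow> bool" where
  "avoids ivs x \<longleftrightarrow> (\<forall>ab\<in>set ivs. \<not> (fst ab < x \<and> x \<le> snd ab))"

fun ordered_intervals :: "real \<Rightarrow> (real \<times> real) list \<Rightarrow> bool" where
  "ordered_intervals c [] \<longleftrightarrow> True"
| "ordered_intervals c ((a, b) # ivs) \<longleftrightarrow> c \<le> a \<and> a \<le> b \<and> ordered_intervals b ivs"

definition total_length :: "(real \<times> real) list \<Rightarrow> real" where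
  "total_length ivs = (\<Sum>(a, b)\<leftarrow>ivs. b - a)"

definition shift_intervals :: "real \<Rightarrow> (real \<times> real) list \<Rightarrow> (real \<times> real) list" where
  "shift_intervals d ivs = map (\<lambda>(a, b). (a - d, b - d)) ivs"

lemma avoids_shift_intervals: "avoids (shift_intervals d ivs) x \<longleftrightarrow> avoids ivs (d + x)"
  by (auto simp: avoids_def shift_intervals_def)

lemma total_length_shift_intervals [simp]: "total_length (shift_intervals d ivs) = total_length ivs"
  by (induction ivs) (auto simp: total_length_def shift_intervals_def)

lemma ordered_intervals_shift:
  "ordered_intervals c ivs \<Longrightarrow> ordered_intervals (c - d) (shift_intervals d ivs)"
  by (induction c ivs rule: ordered_intervals.induct) (auto simp: shift_intervals_def)

lemma avoids_if_le_start: "ordered_intervals c ivs \<Longrightarrow> x \<le> c \<Longrightarrow> avoids ivs x"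
  by (induction c ivs rule: ordered_intervals.induct) (auto simp: avoids_def)

lemma ordered_intervals_map:
  fixes h :: "nat \<Rightarrow> real"
  assumes "mono h"
  shows "sorted_wrt (<) js \<Longrightarrow> (\<forall>j\<in>set js. c \<le> j - 1)
    \<Longrightarrow> ordered_intervals (h c) (map (\<lambda>j. (h (j - 1), h j)) js)"
proof (induction js arbitrary: c)
  case (Cons j js)
  then have "ordered_intervals (h j) (map (\<lambda>j. (h (j - 1), h j)) js)"
    by (intro Cons.IH) auto
  moreover have "h c \<le> h (j - 1)" "h (j - 1) \<le> h j"
    using Cons.prems assms by (auto intro: monoD)
  ultimately show ?case by simp
qed simp

lemma measurable_avoids [measurable]:
  assumes [measurable]: "f \<in> borel_measurable N"
  shows "Measurable.pred N (\<lambda>x. avoids ivs (f x))"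
  unfolding avoids_def by measurable

lemma avoids_Cons_iff_first_exit:
  fixes S :: "nat \<Rightarrow> real"
  assumes S: "mono S" and exit: "a < S m" and ab: "a \<le> b" and ivs: "ordered_intervals b ivs"
  shows "(\<forall>m. avoids ((a, b) # ivs) (S m))
    \<longleftrightarrow> (\<exists>n. (\<forall>m<n. S m \<le> a) \<and> b < S n \<and> (\<forall>k. avoids ivs (S (n + k))))"
proof
  assume avoid: "\<forall>m. avoids ((a, b) # ivs) (S m)"
  define n where "n = (LEAST m. a < S m)"
  have "a < S n" unfolding n_def by (rule LeastI[of _ m]) (rule exit)
  moreover have "S m \<le> a" if "m < n" for m
    using not_less_Least[OF that[unfolded n_def]] by simp
  moreover have "avoids ((a, b) # ivs) (S n)" using avoid by simp
  ultimately show "\<exists>n. (\<forall>m<n. S m \<le> a) \<and> b < S n \<and> (\<forall>k. avoids ivs (S (n + k)))"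
    using avoid by (intro exI[of _ n]) (auto simp: avoids_def)
next
  assume "\<exists>n. (\<forall>m<n. S m \<le> a) \<and> b < S n \<and> (\<forall>k. avoids ivs (S (n + k)))"
  then obtain n where before: "\<forall>m<n. S m \<le> a" and "b < S n" and after: "\<forall>k. avoids ivs (S (n + k))"
    by blast
  show "\<forall>m. avoids ((a, b) # ivs) (S m)"
  proof
    fix m
    show "avoids ((a, b) # ivs) (S m)"
    proof (cases "m < n")
      case True
      then have "S m \<le> a" using before by simp
      moreover from this have "avoids ivs (S m)" using avoids_if_le_start[OF ivs] ab by simp
      ultimately show ?thesis by (auto simp: avoids_def)
    next
      case False
      then obtain k where "m = n + k" by (metis le_add_diff_inverse not_less)
      then show ?thesis
        using after \<open>b < S n\<close> monoD[OF S, of n m] by (auto simp: avoids_def)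
    qed
  qed
qed

lemma change_time_add:
  "change_time g (n + k) \<omega> = (\<Sum>i<n. g i \<omega>) + change_time (\<lambda>i. g (n + i)) k \<omega>"
  by (induction k) (auto simp: change_time_def lessThan_Suc_atMost[symmetric])

lemma change_time_0 [simp]: "change_time g 0 \<omega> = g 0 \<omega>"
  by (simp add: change_time_def)

lemma change_time_eq_first_gap_plus:
  "change_time g k \<omega> = g 0 \<omega> + (\<Sum>i<k. g (Suc i) \<omega>)"
  unfolding change_time_def by (rule sum.atMost_shift)

locale iid_exponential = prob_space +
  fixes l :: real and g :: "nat \<Rightarrow> 'a \<Rightarrow> real"
  assumes rate_pos: "l > 0"
    and distributed_gap: "\<And>n. distributed M lborel (g n) (exponential_density l)"
    and indep_gaps: "indep_vars (\<lambda>_. borel) g UNIV"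
begin

lemma measurable_gap [measurable]: "g n \<in> borel_measurable M"
  using distributed_gap[of n] by (auto dest: distributed_measurable)

lemma measurable_change_time [measurable]: "change_time g n \<in> borel_measurable M"
  unfolding change_time_def by measurable

lemma shifted: "iid_exponential M l (\<lambda>i. g (n + i))"
proof
  show "indep_vars (\<lambda>_. borel) (\<lambda>i. g (n + i)) UNIV"
    using indep_vars_reindex[OF indep_gaps, of "\<lambda>i. n + i" UNIV] by (simp add: inj_def)
qed (use rate_pos distributed_gap in auto)

lemma AE_gaps_pos: "AE \<omega> in M. \<forall>i. 0 < g i \<omega>"
proof (subst AE_all_countable, intro allI)
  fix i
  have "prob {\<omega>\<in>space M. g i \<omega> \<le> 0} = 0"
    using exponential_distributedD_le[OF distributed_gap order.refl rate_pos] by simp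
  then have "AE \<omega> in M. \<omega> \<notin> {\<omega>\<in>space M. g i \<omega> \<le> 0}"
    by (subst prob_eq_0[symmetric]) auto
  then show "AE \<omega> in M. 0 < g i \<omega>" using AE_space by eventually_elim auto
qed

lemma AE_mono_change_time: "AE \<omega> in M. mono (\<lambda>n. change_time g n \<omega>)"
  using AE_gaps_pos
  by eventually_elim (auto intro!: monoI sum_mono2 simp: change_time_def less_imp_le)

lemma prob_change_times_bounded: "prob {\<omega>\<in>space M. \<forall>n. change_time g n \<omega> \<le> a} = 0"
proof -
  let ?A = "{\<omega>\<in>space M. \<forall>n. change_time g n \<omega> \<le> a}"
  define r where "r = 1 - exp (- max 0 a * l)"
  have r: "0 \<le> r" "r < 1" using rate_pos by (auto simp: r_def)
  have "prob ?A \<le> r ^ Suc m" for m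
  proof -
    have "prob ?A \<le> prob {\<omega>\<in>space M. \<forall>i\<le>m. g i \<omega> \<le> max 0 a}"
    proof (rule finite_measure_mono_AE)
      show "AE \<omega> in M. \<omega> \<in> ?A \<longrightarrow> \<omega> \<in> {\<omega>\<in>space M. \<forall>i\<le>m. g i \<omega> \<le> max 0 a}"
        using AE_gaps_pos
      proof eventually_elim
        case (elim \<omega>)
        have "g i \<omega> \<le> change_time g i \<omega>" for i
          unfolding change_time_def using elim by (intro member_le_sum) (auto intro: less_imp_le)
        then show ?case by (fastforce intro: max.coboundedI2 order_trans)
      qed
    qed measurable
    also have "{\<omega>\<in>space M. \<forall>i\<le>m. g i \<omega> \<le> max 0 a} = (\<Inter>i\<in>{..m}. g i -` {..max 0 a} \<inter> space M)"
      by auto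
    also have "prob \<dots> = (\<Prod>i\<in>{..m}. prob (g i -` {..max 0 a} \<inter> space M))"
      by (rule indep_varsD[OF indep_gaps]) auto
    also have "\<dots> = (\<Prod>i\<in>{..m}. r)"
    proof (rule prod.cong[OF refl])
      fix i
      have "g i -` {..max 0 a} \<inter> space M = {\<omega>\<in>space M. g i \<omega> \<le> max 0 a}" by auto
      then show "prob (g i -` {..max 0 a} \<inter> space M) = r"
        using exponential_distributedD_le[OF distributed_gap _ rate_pos, of "max 0 a" i]
        by (simp add: r_def)
    qed
    finally show ?thesis by simp
  qed
  moreover have "(\<lambda>m. r ^ Suc m) \<longlonglongrightarrow> 0"
    using LIMSEQ_power_zero[of r] r by (simp add: tendsto_mult_right_zero)
  ultimately have "prob ?A \<le> 0"
    by (intro LIMSEQ_le_const) auto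
  then show ?thesis using measure_nonneg[of M ?A] by linarith
qed

definition first_exit_event :: "real \<Rightarrow> real \<Rightarrow> (real \<times> real) list \<Rightarrow> nat \<Rightarrow> 'a set" where
  "first_exit_event a b ivs n = {\<omega>\<in>space M. (\<forall>m<n. change_time g m \<omega> \<le> a)
     \<and> b < change_time g n \<omega> \<and> (\<forall>k. avoids ivs (change_time g (n + k) \<omega>))}"

lemma sums_prob_first_exit_event:
  assumes ab: "a \<le> b" and ivs: "ordered_intervals b ivs"
  shows "(\<lambda>n. prob (first_exit_event a b ivs n))
    sums prob {\<omega>\<in>space M. \<forall>m. avoids ((a, b) # ivs) (change_time g m \<omega>)}"
proof -
  let ?E = "first_exit_event a b ivs"
  have "?E n \<in> events" for n unfolding first_exit_event_def by measurable
  then have "range ?E \<subseteq> events" by auto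
  moreover have "disjoint_family ?E"
    unfolding disjoint_family_on_def
  proof (intro ballI impI)
    fix n n' :: nat assume "n \<noteq> n'"
    then consider "n < n'" | "n' < n" by linarith
    then show "?E n \<inter> ?E n' = {}"
      by cases (use ab in \<open>fastforce simp: first_exit_event_def\<close>)+
  qed
  ultimately have "(\<lambda>n. prob (?E n)) sums prob (\<Union>n. ?E n)"
    by (rule finite_measure_UNION)
  moreover have "prob (\<Union>n. ?E n) = prob {\<omega>\<in>space M. \<forall>m. avoids ((a, b) # ivs) (change_time g m \<omega>)}"
  proof (rule finite_measure_eq_AE)
    have "AE \<omega> in M. \<omega> \<notin> {\<omega>\<in>space M. \<forall>m. change_time g m \<omega> \<le> a}"
      using prob_change_times_bounded by (subst prob_eq_0[symmetric]) auto
    then show "AE \<omega> in M. \<omega> \<in> (\<Union>n. ?E n)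
        \<longleftrightarrow> \<omega> \<in> {\<omega>\<in>space M. \<forall>m. avoids ((a, b) # ivs) (change_time g m \<omega>)}"
      using AE_mono_change_time AE_space
    proof eventually_elim
      case (elim \<omega>)
      then obtain m where "a < change_time g m \<omega>" by (auto simp: not_le)
      from avoids_Cons_iff_first_exit[OF elim(2) this ab ivs] elim(3) show ?case
        by (auto simp: first_exit_event_def)
    qed
  qed (unfold first_exit_event_def, measurable)
  ultimately show ?thesis by simp
qed

lemma prob_first_gap_memoryless:
  assumes "s \<le> b"
  shows "prob {\<omega>\<in>space M. b < s + g 0 \<omega> \<and> (\<forall>k. avoids ivs (s + change_time g k \<omega>))}
    = exp (- l * (b - s)) * prob {\<omega>\<in>space M. \<forall>k. avoids ivs (b + change_time g k \<omega>)}"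
proof -
  let ?PU = "PiM UNIV (\<lambda>_. borel) :: (nat \<Rightarrow> real) measure"
  define Q where "Q y z \<longleftrightarrow> (\<forall>k. avoids ivs (b + y + (\<Sum>i<k. z i)))" for y and z :: "nat \<Rightarrow> real"
  have [measurable]: "(\<lambda>z. \<Sum>i<k. snd z i) \<in> borel_measurable (borel \<Otimes>\<^sub>M ?PU)" for k
    by measurable
  have Q: "Measurable.pred (borel \<Otimes>\<^sub>M ?PU) (\<lambda>z. Q (fst z) (snd z))"
    unfolding Q_def by measurable
  have indep: "indep_var (PiM {..<1} (\<lambda>_. borel)) (\<lambda>\<omega>. restrict (\<lambda>i. g i \<omega>) {..<1})
      ?PU (\<lambda>\<omega> i. g (1 + i) \<omega>)"
    by (rule indep_var_prefix_suffix[OF indep_gaps])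
  have first: "(\<lambda>f. f 0) \<in> borel_measurable (PiM {..<1::nat} (\<lambda>_. borel))"
    by (rule measurable_component_singleton) simp
  have D: "distributed M lborel (\<lambda>\<omega>. restrict (\<lambda>i. g i \<omega>) {..<1} 0) (exponential_density l)"
    using distributed_gap[of 0] by simp
  from exponential_distributed_shift_indep[OF indep first D rate_pos _ Q] assms
  have "prob {\<omega>\<in>space M. b - s < g 0 \<omega> \<and> Q (g 0 \<omega> - (b - s)) (\<lambda>i. g (1 + i) \<omega>)}
      = exp (- l * (b - s)) * prob {\<omega>\<in>space M. Q (g 0 \<omega>) (\<lambda>i. g (1 + i) \<omega>)}"
    by simp
  then show ?thesis
    by (simp add: Q_def change_time_eq_first_gap_plus[of g] algebra_simps)
qed

lemma prob_first_exit_given_prefix: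
  fixes x :: "nat \<Rightarrow> real"
  assumes a: "0 \<le> a" and ab: "a \<le> b"
  shows "prob {\<omega>\<in>space M. (\<forall>m\<in>{..<n}. (\<Sum>i\<le>m. x i) \<le> a) \<and> b < (\<Sum>i<n. x i) + g n \<omega>
      \<and> (\<forall>k. avoids ivs ((\<Sum>i<n. x i) + change_time (\<lambda>i. g (n + i)) k \<omega>))}
    = (if \<forall>m\<in>{..<n}. (\<Sum>i\<le>m. x i) \<le> a then exp (- l * (b - (\<Sum>i<n. x i))) else 0)
      * prob {\<omega>\<in>space M. \<forall>k. avoids ivs (b + change_time (\<lambda>i. g (n + i)) k \<omega>)}"
proof (cases "\<forall>m\<in>{..<n}. (\<Sum>i\<le>m. x i) \<le> a")
  case True
  have "(\<Sum>i<n. x i) \<le> a"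
  proof (cases n)
    case (Suc n')
    then have "{..<n} = {..n'}" by auto
    then show ?thesis using True Suc by simp
  qed (simp add: a)
  then show ?thesis
    using True ab iid_exponential.prob_first_gap_memoryless[OF shifted[of n],
        where s="\<Sum>i<n. x i" and b=b and ivs=ivs]
    by simp
next
  case False
  then have "{\<omega>\<in>space M. (\<forall>m\<in>{..<n}. (\<Sum>i\<le>m. x i) \<le> a) \<and> P \<omega>} = {}" for P
    by auto
  then show ?thesis by (simp only: if_not_P[OF False] measure_empty mult_zero_left)
qed

lemma prob_first_exit_event:
  assumes a: "0 \<le> a" and ab: "a \<le> b"
  shows "prob (first_exit_event a b ivs n) = exp (- l * (b - a))
    * expectation (\<lambda>\<omega>. if \<forall>m<n. change_time g m \<omega> \<le> a then exp (- l * (a - (\<Sum>i<n. g i \<omega>))) else 0)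
    * prob {\<omega>\<in>space M. \<forall>k. avoids ivs (b + change_time (\<lambda>i. g (n + i)) k \<omega>)}"
proof -
  let ?PX = "PiM {..<n} (\<lambda>_. borel) :: (nat \<Rightarrow> real) measure"
  let ?PU = "PiM UNIV (\<lambda>_. borel) :: (nat \<Rightarrow> real) measure"
  let ?X = "\<lambda>\<omega>. restrict (\<lambda>i. g i \<omega>) {..<n}"
  let ?W = "\<lambda>\<omega> i. g (n + i) \<omega>"
  define P where "P = prob {\<omega>\<in>space M. \<forall>k. avoids ivs (b + change_time (\<lambda>i. g (n + i)) k \<omega>)}"
  define past where "past x \<longleftrightarrow> (\<forall>m\<in>{..<n}. (\<Sum>i\<le>m. x i) \<le> a)" for x :: "nat \<Rightarrow> real"
  define total where "total x = (\<Sum>i<n. x i)" for x :: "nat \<Rightarrow> real"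
  define R where "R x w \<longleftrightarrow> past x \<and> b < total x + w 0 \<and> (\<forall>k. avoids ivs (total x + (\<Sum>i\<le>k. w i)))"
    for x w :: "nat \<Rightarrow> real"
  have indep: "indep_var ?PX ?X ?PU ?W"
    by (rule indep_var_prefix_suffix[OF indep_gaps])
  then have [measurable]: "?X \<in> measurable M ?PX" by (rule indep_var_rv1)
  have [measurable]: "(\<lambda>x. \<Sum>i\<le>m. x i) \<in> borel_measurable ?PX" if "m \<in> {..<n}" for m
    using that by (intro borel_measurable_sum measurable_component_singleton) auto
  have [measurable]: "Measurable.pred ?PX past" "total \<in> borel_measurable ?PX"
    unfolding past_def[abs_def] total_def[abs_def] by measurable
  have [measurable]: "(\<lambda>z. \<Sum>i\<le>k. snd z i) \<in> borel_measurable (?PX \<Otimes>\<^sub>M ?PU)" for k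
    by measurable
  have past_X: "past (?X \<omega>) \<longleftrightarrow> (\<forall>m<n. change_time g m \<omega> \<le> a)" for \<omega>
  proof -
    have "(\<Sum>i\<le>m. ?X \<omega> i) = change_time g m \<omega>" if "m < n" for m
      using that by (auto simp: change_time_def intro!: sum.cong)
    then show ?thesis by (auto simp: past_def)
  qed
  have total_X: "total (?X \<omega>) = (\<Sum>i<n. g i \<omega>)" for \<omega>
    by (simp add: total_def)
  have W_sum: "(\<Sum>i\<le>k. ?W \<omega> i) = change_time (\<lambda>i. g (n + i)) k \<omega>" for k \<omega>
    by (simp add: change_time_def)
  have "first_exit_event a b ivs n = {\<omega>\<in>space M. R (?X \<omega>) (?W \<omega>)}"
    using change_time_add[of g n 0]
    by (auto simp: first_exit_event_def R_def past_X total_X change_time_add W_sum)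
  moreover have "Measurable.pred (?PX \<Otimes>\<^sub>M ?PU) (\<lambda>z. R (fst z) (snd z))"
    unfolding R_def by measurable
  moreover have "prob {\<omega>\<in>space M. R x (?W \<omega>)} = (if past x then exp (- l * (b - total x)) else 0) * P"
    for x
    using prob_first_exit_given_prefix[OF a ab, of n x ivs]
    by (simp add: R_def past_def total_def P_def W_sum)
  ultimately have "prob (first_exit_event a b ivs n)
      = (\<integral>x. (if past x then exp (- l * (b - total x)) else 0) * P \<partial>distr M ?PX ?X)"
    using prob_indep_var_eq_integral[OF indep] by simp
  also have "\<dots> = expectation (\<lambda>\<omega>. (if past (?X \<omega>) then exp (- l * (b - total (?X \<omega>))) else 0)) * P"
    by (subst integral_distr) auto
  also have "(\<lambda>\<omega>. if past (?X \<omega>) then exp (- l * (b - total (?X \<omega>))) else 0) = (\<lambda>\<omega>. exp (- l * (b - a))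
      * (if \<forall>m<n. change_time g m \<omega> \<le> a then exp (- l * (a - (\<Sum>i<n. g i \<omega>))) else 0))"
    by (auto simp: past_X total_X exp_add[symmetric] algebra_simps)
  finally show ?thesis by (simp add: P_def)
qed

end

lemma (in prob_space) prob_avoids_intervals:
  assumes "iid_exponential M l g" and "ordered_intervals 0 ivs"
  shows "prob {\<omega>\<in>space M. \<forall>m. avoids ivs (change_time g m \<omega>)} = exp (- l * total_length ivs)"
  using assms
proof (induction "length ivs" arbitrary: ivs g rule: less_induct)
  case less
  interpret iid_exponential M l g by fact
  show ?case
  proof (cases ivs)
    case Nil
    then show ?thesis by (simp add: avoids_def total_length_def prob_space)
  next
    case (Cons ab ivs')
    obtain a b where ab_def: "ab = (a, b)" by (cases ab)
    have a: "0 \<le> a" and ab: "a \<le> b" and ivs': "ordered_intervals b ivs'"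
      using less.prems(2) by (auto simp: Cons ab_def)
    txt \<open>The weights w n are the probabilities that the process first exceeds a at step n, as the
      case b = a, ivs = [] shows; hence they sum to 1.\<close>
    define w where "w n = expectation (\<lambda>\<omega>. if \<forall>m<n. change_time g m \<omega> \<le> a
      then exp (- l * (a - (\<Sum>i<n. g i \<omega>))) else 0)" for n
    have "(\<lambda>n. prob (first_exit_event a a [] n))
        sums prob {\<omega>\<in>space M. \<forall>m. avoids [(a, a)] (change_time g m \<omega>)}"
      by (rule sums_prob_first_exit_event) auto
    moreover have "prob (first_exit_event a a [] n) = w n" for n
      using prob_first_exit_event[OF a order.refl, of "[]" n] by (simp add: w_def avoids_def prob_space)
    ultimately have w: "w sums 1" by (simp add: avoids_def prob_space)
    have len: "length (shift_intervals b ivs') < length ivs"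
      by (simp add: Cons shift_intervals_def)
    have ord: "ordered_intervals 0 (shift_intervals b ivs')"
      using ordered_intervals_shift[OF ivs', of b] by simp
    have "prob {\<omega>\<in>space M. \<forall>k. avoids ivs' (b + change_time (\<lambda>i. g (n + i)) k \<omega>)}
        = exp (- l * total_length ivs')" for n
      using less.hyps[OF len shifted ord] by (simp add: avoids_shift_intervals)
    then have "prob (first_exit_event a b ivs' n)
        = exp (- l * (b - a)) * exp (- l * total_length ivs') * w n"
      for n
      using prob_first_exit_event[OF a ab, of ivs' n] by (simp add: w_def)
    then have "(\<lambda>n. exp (- l * (b - a)) * exp (- l * total_length ivs') * w n)
        sums prob {\<omega>\<in>space M. \<forall>m. avoids ivs (change_time g m \<omega>)}"
      using sums_prob_first_exit_event[OF ab ivs'] by (simp add: Cons ab_def)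
    moreover have "(\<lambda>n. exp (- l * (b - a)) * exp (- l * total_length ivs') * w n)
        sums (exp (- l * (b - a)) * exp (- l * total_length ivs'))"
      using sums_mult[OF w] by simp
    ultimately show ?thesis
      by (auto simp: Cons ab_def total_length_def exp_add[symmetric] algebra_simps dest: sums_unique2)
  qed
qed

lemma (in iid_exponential) prob_no_change_in_windows:
  fixes x :: "nat \<Rightarrow> real"
  assumes x: "\<And>i. 0 \<le> x i" and J: "finite J" "0 \<notin> J"
  shows "prob {\<omega>\<in>space M. \<forall>j\<in>J. \<forall>n. \<not> ((\<Sum>i<j - 1. x i) < change_time g n \<omega>
      \<and> change_time g n \<omega> \<le> (\<Sum>i<j. x i))} = exp (- l * (\<Sum>j\<in>J. x (j - 1)))"
proof -
  define T where "T j = (\<Sum>i<j. x i)" for j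
  define ivs where "ivs = map (\<lambda>j. (T (j - 1), T j)) (sorted_list_of_set J)"
  have "mono T"
    using x by (auto simp: mono_def T_def intro!: sum_mono2)
  then have "ordered_intervals (T 0) ivs"
    unfolding ivs_def by (rule ordered_intervals_map) auto
  then have "prob {\<omega>\<in>space M. \<forall>m. avoids ivs (change_time g m \<omega>)} = exp (- l * total_length ivs)"
    by (intro prob_avoids_intervals iid_exponential_axioms) (simp add: T_def)
  moreover have "total_length ivs = (\<Sum>j\<in>J. x (j - 1))"
  proof -
    have "total_length ivs = (\<Sum>j\<in>J. T j - T (j - 1))"
      using J by (simp add: total_length_def ivs_def comp_def sum_list_distinct_conv_sum_set)
    also have "\<dots> = (\<Sum>j\<in>J. x (j - 1))"
    proof (rule sum.cong[OF refl])
      fix j assume "j \<in> J"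
      then obtain j' where "j = Suc j'" using J by (cases j) auto
      then show "T j - T (j - 1) = x (j - 1)" by (simp add: T_def)
    qed
    finally show ?thesis .
  qed
  moreover have "{\<omega>\<in>space M. \<forall>m. avoids ivs (change_time g m \<omega>)}
      = {\<omega>\<in>space M. \<forall>j\<in>J. \<forall>n. \<not> (T (j - 1) < change_time g n \<omega> \<and> change_time g n \<omega> \<le> T j)}"
    using J by (auto simp: avoids_def ivs_def)
  ultimately show ?thesis by (simp add: T_def)
qed

section \<open>Averages of independent [0, 1]-valued random variables\<close>

lemma (in prob_space) expectation_abs_le_sqrt:
  fixes X :: "'a \<Rightarrow> real"
  assumes "integrable M X" "integrable M (\<lambda>\<omega>. (X \<omega>)\<^sup>2)"
  shows "expectation (\<lambda>\<omega>. \<bar>X \<omega>\<bar>) \<le> sqrt (expectation (\<lambda>\<omega>. (X \<omega>)\<^sup>2))"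
proof (rule real_le_rsqrt)
  have "0 \<le> variance (\<lambda>\<omega>. \<bar>X \<omega>\<bar>)" by (rule variance_positive)
  also have "variance (\<lambda>\<omega>. \<bar>X \<omega>\<bar>) = expectation (\<lambda>\<omega>. (X \<omega>)\<^sup>2) - (expectation (\<lambda>\<omega>. \<bar>X \<omega>\<bar>))\<^sup>2"
    using assms by (subst variance_eq) auto
  finally show "(expectation (\<lambda>\<omega>. \<bar>X \<omega>\<bar>))\<^sup>2 \<le> expectation (\<lambda>\<omega>. (X \<omega>)\<^sup>2)" by simp
qed

locale indep_unit_interval_seq = prob_space +
  fixes X :: "nat \<Rightarrow> 'a \<Rightarrow> real" and \<mu> :: real
  assumes indep: "indep_vars (\<lambda>_. borel) X {1..}"
    and in_unit_interval: "\<And>i \<omega>. X i \<omega> \<in> {0..1}"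
    and expectation_eq: "\<And>i. i \<ge> 1 \<Longrightarrow> expectation (X i) = \<mu>"
begin

lemma measurable_X: "i \<ge> 1 \<Longrightarrow> X i \<in> borel_measurable M"
  using indep by (auto simp: indep_vars_def)

lemma measurable_partial_sum [measurable]: "(\<lambda>\<omega>. \<Sum>i=1..k. X i \<omega>) \<in> borel_measurable M"
  by (intro borel_measurable_sum measurable_X) simp

lemma integrable_X: "i \<ge> 1 \<Longrightarrow> integrable M (X i)"
  using in_unit_interval by (intro integrable_const_bound[where B=1] measurable_X) auto

lemma mean_bounds: "0 \<le> \<mu>" "\<mu> \<le> 1"
proof -
  have "expectation (\<lambda>_. 0) \<le> expectation (X 1)"
    using in_unit_interval by (intro integral_mono integrable_X) auto
  moreover have "expectation (X 1) \<le> expectation (\<lambda>_. 1)"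
    using in_unit_interval by (intro integral_mono integrable_X) auto
  ultimately show "0 \<le> \<mu>" "\<mu> \<le> 1" using expectation_eq[of 1] by (simp_all add: prob_space)
qed

lemma prob_partial_sum_deviation_le:
  assumes k: "k \<ge> 1" and \<epsilon>: "\<epsilon> \<ge> 0"
  shows "prob {\<omega>\<in>space M. \<epsilon> \<le> \<bar>(\<Sum>i=1..k. X i \<omega>) - real k * \<mu>\<bar>} \<le> 2 * exp (- 2 * \<epsilon>\<^sup>2 / real k)"
proof -
  interpret Hoeffding_ineq M "{1..k}" X "\<lambda>_. 0" "\<lambda>_. 1" "real k * \<mu>"
  proof unfold_locales
    show "indep_vars (\<lambda>_. borel) X {1..k}"
      by (rule indep_vars_subset[OF indep]) auto
    show "real k * \<mu> \<equiv> (\<Sum>i=1..k. expectation (X i))"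
      by (simp add: expectation_eq)
  qed (use in_unit_interval in auto)
  show ?thesis
    using Hoeffding_ineq_abs_ge[OF \<epsilon>] k by simp
qed

lemma AE_eventually_average_close:
  assumes \<delta>: "\<delta> > 0"
  shows "AE \<omega> in M. eventually (\<lambda>k. \<bar>(\<Sum>i=1..k. X i \<omega>) / real k - \<mu>\<bar> < \<delta>) sequentially"
proof -
  define B where "B k = {\<omega>\<in>space M. real k * \<delta> \<le> \<bar>(\<Sum>i=1..k. X i \<omega>) - real k * \<mu>\<bar>}" for k
  have [measurable]: "B k \<in> events" for k unfolding B_def by measurable
  have bound: "prob (B k) \<le> 2 * exp (- 2 * \<delta>\<^sup>2) ^ k" if k: "k \<ge> 1" for k
  proof -
    have "prob (B k) \<le> 2 * exp (- 2 * (real k * \<delta>)\<^sup>2 / real k)"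
      unfolding B_def using \<delta> by (intro prob_partial_sum_deviation_le k) simp
    also have "- 2 * (real k * \<delta>)\<^sup>2 / real k = real k * (- 2 * \<delta>\<^sup>2)"
      using k by (simp add: power2_eq_square field_simps)
    also have "exp \<dots> = exp (- 2 * \<delta>\<^sup>2) ^ k" by (rule exp_of_nat_mult)
    finally show ?thesis .
  qed
  have "summable (\<lambda>k. prob (B k))"
  proof (rule summable_comparison_test'[where N=1])
    show "summable (\<lambda>k. 2 * exp (- 2 * \<delta>\<^sup>2) ^ k)"
      using \<delta> by (intro summable_mult summable_geometric) simp
  qed (use bound in simp)
  then have "AE \<omega> in M. eventually (\<lambda>k. \<omega> \<in> space M - B k) sequentially"
    by (intro borel_cantelli_AE1) (auto simp: emeasure_eq_measure)
  then show ?thesis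
  proof eventually_elim
    case (elim \<omega>)
    with eventually_ge_at_top[of 1] show ?case
    proof eventually_elim
      case (elim k)
      then have k: "real k > 0" by simp
      have "\<bar>(\<Sum>i=1..k. X i \<omega>) - real k * \<mu>\<bar> < real k * \<delta>" using elim by (auto simp: B_def)
      moreover have "(\<Sum>i=1..k. X i \<omega>) / real k - \<mu> = ((\<Sum>i=1..k. X i \<omega>) - real k * \<mu>) / real k"
        using k by (simp add: field_simps)
      ultimately show ?case using k by (simp add: abs_divide field_simps)
    qed
  qed
qed

lemma AE_average_tendsto: "AE \<omega> in M. (\<lambda>k. (\<Sum>i=1..k. X i \<omega>) / real k) \<longlonglongrightarrow> \<mu>"
proof -
  have "AE \<omega> in M. \<forall>m. eventually (\<lambda>k. \<bar>(\<Sum>i=1..k. X i \<omega>) / real k - \<mu>\<bar> < 1 / Suc m) sequentially"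
    by (subst AE_all_countable) (intro allI AE_eventually_average_close; simp)
  then show ?thesis
  proof eventually_elim
    case (elim \<omega>)
    show ?case
    proof (rule tendstoI)
      fix e :: real assume "e > 0"
      then obtain m where m: "inverse (real (Suc m)) < e" using reals_Archimedean by blast
      show "eventually (\<lambda>k. dist ((\<Sum>i=1..k. X i \<omega>) / real k) \<mu> < e) sequentially"
        using elim[rule_format, of m]
        by eventually_elim (use m in \<open>auto simp: dist_real_def divide_inverse\<close>)
    qed
  qed
qed

lemma abs_centered_le: "\<bar>X i \<omega> - \<mu>\<bar> \<le> 1"
  using in_unit_interval[of i \<omega>] mean_bounds by auto

lemma integrable_centered_product:
  assumes "i \<ge> 1" "j \<ge> 1"
  shows "integrable M (\<lambda>\<omega>. (X i \<omega> - \<mu>) * (X j \<omega> - \<mu>))"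
proof (rule integrable_const_bound[where B=1])
  show "(\<lambda>\<omega>. (X i \<omega> - \<mu>) * (X j \<omega> - \<mu>)) \<in> borel_measurable M"
    using measurable_X[OF assms(1)] measurable_X[OF assms(2)] by measurable
qed (use abs_centered_le in \<open>auto simp: abs_mult intro!: mult_le_one\<close>)

lemma expectation_centered_product:
  assumes "i \<ge> 1" "j \<ge> 1" "i \<noteq> j"
  shows "expectation (\<lambda>\<omega>. (X i \<omega> - \<mu>) * (X j \<omega> - \<mu>)) = 0"
proof -
  have "indep_vars (\<lambda>_. borel) (\<lambda>i \<omega>. X i \<omega> - \<mu>) {i, j}"
    using assms by (intro indep_vars_subset[OF indep_vars_compose2[OF indep]]) auto
  then have "expectation (\<lambda>\<omega>. \<Prod>t\<in>{i, j}. X t \<omega> - \<mu>) = (\<Prod>t\<in>{i, j}. expectation (\<lambda>\<omega>. X t \<omega> - \<mu>))"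
    using assms by (intro indep_vars_lebesgue_integral) (auto simp: integrable_X)
  moreover have "expectation (\<lambda>\<omega>. X t \<omega> - \<mu>) = 0" if "t \<ge> 1" for t
    using expectation_eq[OF that] integrable_X[OF that] by (simp add: prob_space)
  ultimately show ?thesis using assms by simp
qed

lemma expectation_partial_sum_deviation_square_le:
  "expectation (\<lambda>\<omega>. ((\<Sum>i=1..k. X i \<omega>) - real k * \<mu>)\<^sup>2) \<le> real k"
proof -
  have "(\<Sum>i=1..k. X i \<omega>) - real k * \<mu> = (\<Sum>i=1..k. X i \<omega> - \<mu>)" for \<omega>
    by (simp add: sum_subtractf)
  then have "((\<Sum>i=1..k. X i \<omega>) - real k * \<mu>)\<^sup>2 = (\<Sum>i=1..k. \<Sum>j=1..k. (X i \<omega> - \<mu>) * (X j \<omega> - \<mu>))" for \<omega>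
    by (simp add: power2_eq_square sum_product)
  then have "expectation (\<lambda>\<omega>. ((\<Sum>i=1..k. X i \<omega>) - real k * \<mu>)\<^sup>2)
      = expectation (\<lambda>\<omega>. \<Sum>i=1..k. \<Sum>j=1..k. (X i \<omega> - \<mu>) * (X j \<omega> - \<mu>))"
    by simp
  also have "\<dots> = (\<Sum>i=1..k. \<Sum>j=1..k. expectation (\<lambda>\<omega>. (X i \<omega> - \<mu>) * (X j \<omega> - \<mu>)))"
    by (subst Bochner_Integration.integral_sum)
      (auto intro!: sum.cong Bochner_Integration.integral_sum Bochner_Integration.integrable_sum
        integrable_centered_product)
  also have "\<dots> = (\<Sum>i=1..k. expectation (\<lambda>\<omega>. (X i \<omega> - \<mu>) * (X i \<omega> - \<mu>)))"
    by (intro sum.cong refl, subst sum.remove[of _ i for i])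
      (auto intro!: sum.neutral expectation_centered_product)
  also have "\<dots> \<le> (\<Sum>i=1..k. 1)"
  proof (rule sum_mono)
    fix i assume "i \<in> {1..k}"
    have "(X i \<omega> - \<mu>) * (X i \<omega> - \<mu>) \<le> 1" for \<omega>
      using abs_centered_le[of i \<omega>] abs_square_le_1[of "X i \<omega> - \<mu>"] by (simp add: power2_eq_square)
    then have "expectation (\<lambda>\<omega>. (X i \<omega> - \<mu>) * (X i \<omega> - \<mu>)) \<le> expectation (\<lambda>\<omega>. 1)"
      using integrable_centered_product[of i i] \<open>i \<in> {1..k}\<close> by (intro integral_mono) auto
    then show "expectation (\<lambda>\<omega>. (X i \<omega> - \<mu>) * (X i \<omega> - \<mu>)) \<le> 1" by (simp add: prob_space)
  qed
  finally show ?thesis by simp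
qed

lemma average_in_unit_interval:
  assumes "k \<ge> 1"
  shows "(\<Sum>i=1..k. X i \<omega>) / real k \<in> {0..1}"
proof -
  have "(\<Sum>i=1..k. X i \<omega>) \<le> (\<Sum>i=1..k. 1)"
    using in_unit_interval by (intro sum_mono) auto
  moreover have "0 \<le> (\<Sum>i=1..k. X i \<omega>)"
    using in_unit_interval by (intro sum_nonneg) auto
  ultimately show ?thesis using assms by (simp add: field_simps)
qed

lemma expectation_abs_average_deviation_le:
  assumes k: "k \<ge> 1"
  shows "expectation (\<lambda>\<omega>. \<bar>(\<Sum>i=1..k. X i \<omega>) / real k - \<mu>\<bar>) \<le> 1 / sqrt (real k)"
proof -
  define Y where "Y \<omega> = (\<Sum>i=1..k. X i \<omega>) / real k - \<mu>" for \<omega>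
  have Y_eq: "Y \<omega> = ((\<Sum>i=1..k. X i \<omega>) - real k * \<mu>) / real k" for \<omega>
    using k by (simp add: Y_def field_simps)
  have Y_le: "\<bar>Y \<omega>\<bar> \<le> 1" for \<omega>
    using average_in_unit_interval[OF k, of \<omega>] mean_bounds by (auto simp: Y_def abs_le_iff)
  have [measurable]: "Y \<in> borel_measurable M" unfolding Y_def by measurable
  have "expectation (\<lambda>\<omega>. \<bar>Y \<omega>\<bar>) \<le> sqrt (expectation (\<lambda>\<omega>. (Y \<omega>)\<^sup>2))"
    using Y_le abs_square_le_1
    by (intro expectation_abs_le_sqrt integrable_const_bound[where B=1]) auto
  also have "expectation (\<lambda>\<omega>. (Y \<omega>)\<^sup>2)
      = expectation (\<lambda>\<omega>. ((\<Sum>i=1..k. X i \<omega>) - real k * \<mu>)\<^sup>2) / (real k)\<^sup>2"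
    by (simp add: Y_eq power_divide)
  also have "\<dots> \<le> real k / (real k)\<^sup>2"
    by (intro divide_right_mono expectation_partial_sum_deviation_square_le) simp
  also have "sqrt (real k / (real k)\<^sup>2) = 1 / sqrt (real k)"
    by (simp add: power2_eq_square real_sqrt_divide)
  finally show ?thesis by (simp add: Y_def)
qed

end

section \<open>The page change model\<close>

locale page_change_model = prob_space +
  fixes \<Delta> p :: real and G A :: "nat \<Rightarrow> 'a \<Rightarrow> real"
  assumes \<Delta>_pos: "\<Delta> > 0" and p_pos: "p > 0"
    and distributed_G: "\<And>n. distributed M lborel (G n) (exponential_density \<Delta>)"
    and distributed_A: "\<And>n. distributed M lborel (A n) (exponential_density p)"
    and indep_GA: "indep_vars (\<lambda>_. borel) (\<lambda>i. case i of Inl n \<Rightarrow> G n | Inr n \<Rightarrow> A n) UNIV"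
begin

sublocale changes: iid_exponential M \<Delta> G
proof
  show "indep_vars (\<lambda>_. borel) G UNIV"
    using indep_vars_reindex[OF indep_GA, of Inl UNIV] by simp
qed (use \<Delta>_pos distributed_G in auto)

sublocale accesses: iid_exponential M p A
proof
  show "indep_vars (\<lambda>_. borel) A UNIV"
    using indep_vars_reindex[OF indep_GA, of Inr UNIV] by simp
qed (use p_pos distributed_A in auto)

lemma indep_var_accesses_changes:
  "indep_var (PiM UNIV (\<lambda>_. borel)) (\<lambda>\<omega> i. A i \<omega>) (PiM UNIV (\<lambda>_. borel)) (\<lambda>\<omega> i. G i \<omega>)"
proof -
  let ?F = "\<lambda>i. case i of Inl n \<Rightarrow> G n | Inr n \<Rightarrow> A n"
  have "indep_var (PiM (range Inr) (\<lambda>_. borel)) (\<lambda>\<omega>. restrict (\<lambda>i. ?F i \<omega>) (range Inr))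
      (PiM (range Inl) (\<lambda>_. borel)) (\<lambda>\<omega>. restrict (\<lambda>i. ?F i \<omega>) (range Inl))"
    by (rule indep_var_restrict[OF indep_GA]) auto
  moreover have "(\<lambda>f i. f (Inr i)) \<in> measurable (PiM (range Inr) (\<lambda>_. borel)) (PiM UNIV (\<lambda>_. borel))"
    "(\<lambda>f i. f (Inl i)) \<in> measurable (PiM (range Inl) (\<lambda>_. borel)) (PiM UNIV (\<lambda>_. borel))"
    by (auto intro!: measurable_PiM_single' measurable_component_singleton)
  ultimately show ?thesis
    by (auto dest: indep_var_compose simp: comp_def)
qed

definition no_change :: "nat \<Rightarrow> 'a set" where
  "no_change j = {\<omega>\<in>space M. \<forall>n. \<not> (access_time A (j - 1) \<omega> < change_time G n \<omega>
     \<and> change_time G n \<omega> \<le> access_time A j \<omega>)}"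

lemma no_change_in_events [measurable]: "no_change j \<in> events"
  unfolding no_change_def access_time_def by measurable

lemma change_ind_eq: "\<omega> \<in> space M \<Longrightarrow> change_ind G A j \<omega> = 1 - indicator (no_change j) \<omega>"
  by (auto simp: change_ind_def no_change_def indicator_def)

lemma prob_INT_no_change_eq_expectation:
  assumes J: "finite J" "J \<noteq> {}" "0 \<notin> J"
  shows "prob (\<Inter>j\<in>J. no_change j) = expectation (\<lambda>\<omega>. \<Prod>j\<in>J. exp (- \<Delta> * A (j - 1) \<omega>))"
proof -
  let ?PU = "PiM UNIV (\<lambda>_. borel) :: (nat \<Rightarrow> real) measure"
  define R where "R a gs \<longleftrightarrow> (\<forall>j\<in>J. \<forall>n. \<not> ((\<Sum>i<j - 1. a i) < (\<Sum>i\<le>n. gs i)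
    \<and> (\<Sum>i\<le>n. gs i) \<le> (\<Sum>i<j. a i)))" for a gs :: "nat \<Rightarrow> real"
  have indep: "indep_var ?PU (\<lambda>\<omega> i. A i \<omega>) ?PU (\<lambda>\<omega> i. G i \<omega>)"
    by (rule indep_var_accesses_changes)
  have [measurable]: "(\<lambda>\<omega> i. A i \<omega>) \<in> measurable M ?PU" "(\<lambda>\<omega> i. G i \<omega>) \<in> measurable M ?PU"
    using indep by (auto dest: indep_var_rv1 indep_var_rv2)
  have [measurable]: "(\<lambda>z. \<Sum>i<k. fst z i) \<in> borel_measurable (?PU \<Otimes>\<^sub>M ?PU)"
    "(\<lambda>z. \<Sum>i\<le>k. snd z i) \<in> borel_measurable (?PU \<Otimes>\<^sub>M ?PU)" for k
    by measurable
  have R_measurable: "Measurable.pred (?PU \<Otimes>\<^sub>M ?PU) (\<lambda>z. R (fst z) (snd z))"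
    unfolding R_def using J(1) by measurable
  have "AE \<omega> in M. \<forall>i. 0 \<le> A i \<omega>"
    using accesses.AE_gaps_pos by eventually_elim (auto intro: less_imp_le)
  then have AE_nonneg: "AE a in distr M ?PU (\<lambda>\<omega> i. A i \<omega>). \<forall>i. 0 \<le> a i"
    by (subst AE_distr_iff) auto
  have "prob (\<Inter>j\<in>J. no_change j) = prob {\<omega>\<in>space M. R (\<lambda>i. A i \<omega>) (\<lambda>i. G i \<omega>)}"
    using J(2)
    by (auto simp: no_change_def R_def access_time_def change_time_def intro!: arg_cong[where f=prob])
  also have "\<dots> = (\<integral>a. prob {\<omega>\<in>space M. R a (\<lambda>i. G i \<omega>)} \<partial>distr M ?PU (\<lambda>\<omega> i. A i \<omega>))"
    by (rule prob_indep_var_eq_integral[OF indep R_measurable])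
  also have "\<dots> = (\<integral>a. (\<Prod>j\<in>J. exp (- \<Delta> * a (j - 1))) \<partial>distr M ?PU (\<lambda>\<omega> i. A i \<omega>))"
  proof (rule integral_cong_AE)
    show "AE a in distr M ?PU (\<lambda>\<omega> i. A i \<omega>).
        prob {\<omega>\<in>space M. R a (\<lambda>i. G i \<omega>)} = (\<Prod>j\<in>J. exp (- \<Delta> * a (j - 1)))"
      using AE_nonneg
    proof eventually_elim
      case (elim a)
      then have "prob {\<omega>\<in>space M. R a (\<lambda>i. G i \<omega>)} = exp (- \<Delta> * (\<Sum>j\<in>J. a (j - 1)))"
        using changes.prob_no_change_in_windows[of a J] J by (simp add: R_def change_time_def)
      then show ?case by (simp add: sum_distrib_left exp_sum[OF J(1)])
    qed
  qed (auto intro: borel_measurable_prob_section[OF _ R_measurable])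
  also have "\<dots> = expectation (\<lambda>\<omega>. \<Prod>j\<in>J. exp (- \<Delta> * A (j - 1) \<omega>))"
    by (subst integral_distr) auto
  finally show ?thesis .
qed

lemma prob_INT_no_change:
  assumes J: "finite J" "J \<noteq> {}" "0 \<notin> J"
  shows "prob (\<Inter>j\<in>J. no_change j) = (p / (p + \<Delta>)) ^ card J"
proof -
  have "prob (\<Inter>j\<in>J. no_change j) = (\<Prod>j\<in>J. expectation (\<lambda>\<omega>. exp (- \<Delta> * A (j - 1) \<omega>)))"
    unfolding prob_INT_no_change_eq_expectation[OF J]
  proof (rule indep_vars_lebesgue_integral[OF J(1)])
    have "j \<ge> 1" if "j \<in> J" for j using that J(3) by (cases j) auto
    then have "inj_on (\<lambda>j. j - 1) J" by (intro inj_on_diff_nat) auto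
    then have "indep_vars (\<lambda>_. borel) (\<lambda>j. A (j - 1)) J"
      using indep_vars_reindex[OF accesses.indep_gaps] by simp
    then show "indep_vars (\<lambda>_. borel) (\<lambda>j \<omega>. exp (- \<Delta> * A (j - 1) \<omega>)) J"
      by (rule indep_vars_compose2) measurable
    show "integrable M (\<lambda>\<omega>. exp (- \<Delta> * A (j - 1) \<omega>))" for j
      using accesses.AE_gaps_pos \<Delta>_pos
      by (intro integrable_const_bound[where B=1])
        (auto elim!: eventually_mono simp: zero_le_mult_iff less_imp_le)
  qed
  also have "\<dots> = (p / (p + \<Delta>)) ^ card J"
    using exponential_distributed_laplace[OF distributed_A p_pos] \<Delta>_pos by simp
  finally show ?thesis .
qed

definition q :: real where "q = \<Delta> / (p + \<Delta>)"

lemma q_bounds: "0 < q" "q < 1"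
  using \<Delta>_pos p_pos by (auto simp: q_def)

lemma \<Delta>_eq: "\<Delta> = p * q / (1 - q)"
proof -
  have "1 - q = p / (p + \<Delta>)" using \<Delta>_pos p_pos by (simp add: q_def field_simps)
  then show ?thesis using \<Delta>_pos p_pos by (simp add: q_def)
qed

lemma prob_no_change: "j \<ge> 1 \<Longrightarrow> prob (no_change j) = p / (p + \<Delta>)"
  using prob_INT_no_change[of "{j}"] by simp

lemma indep_events_no_change: "indep_events no_change {1..}"
proof (rule indep_eventsI)
  fix J :: "nat set" assume J: "J \<subseteq> {1..}" "finite J" "J \<noteq> {}"
  then have "prob (\<Inter>j\<in>J. no_change j) = (p / (p + \<Delta>)) ^ card J"
    by (intro prob_INT_no_change) auto
  also have "\<dots> = (\<Prod>j\<in>J. prob (no_change j))"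
    using J prob_no_change by (simp add: subset_eq)
  finally show "prob (\<Inter>j\<in>J. no_change j) = (\<Prod>j\<in>J. prob (no_change j))" .
qed simp

lemma measurable_change_ind [measurable]: "change_ind G A j \<in> borel_measurable M"
proof -
  have "(\<lambda>\<omega>. 1 - indicator (no_change j) \<omega> :: real) \<in> borel_measurable M" by measurable
  then show ?thesis by (rule measurable_cong[THEN iffD2, rotated]) (simp add: change_ind_eq)
qed

sublocale change_indicators: indep_unit_interval_seq M "change_ind G A" q
proof
  have "indep_vars (\<lambda>_. borel) (\<lambda>j \<omega>. 1 - indicator (no_change j) \<omega> :: real) {1..}"
    by (rule indep_vars_compose2[OF indep_vars_indicator[OF indep_events_no_change]]) measurable
  then show "indep_vars (\<lambda>_. borel) (change_ind G A) {1..}"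
    by (rule indep_vars_cong_space) (simp add: change_ind_eq)
  show "change_ind G A j \<omega> \<in> {0..1}" for j \<omega>
    by (simp add: change_ind_def)
  fix j :: nat assume "j \<ge> 1"
  have "expectation (change_ind G A j) = expectation (\<lambda>\<omega>. 1 - indicator (no_change j) \<omega>)"
    by (rule Bochner_Integration.integral_cong) (auto simp: change_ind_eq)
  also have "\<dots> = q"
    using prob_no_change[OF \<open>j \<ge> 1\<close>] \<Delta>_pos p_pos
    by (subst Bochner_Integration.integral_diff)
      (auto simp: prob_space less_top[symmetric] q_def field_simps)
  finally show "expectation (change_ind G A j) = q" .
qed

end

section \<open>Error of the LLN estimator\<close>

lemma estimator_map_bounds:
  fixes p u a :: real
  assumes "0 \<le> p" "0 \<le> u" "u \<le> 1" "0 < a"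
  shows "0 \<le> p * u / (1 + a - u)" "p * u / (1 + a - u) \<le> p / a"
proof -
  show "0 \<le> p * u / (1 + a - u)" using assms by simp
  have "p * u / (1 + a - u) \<le> p / (1 + a - u)"
    using assms by (intro divide_right_mono) (auto intro: mult_left_le)
  also have "\<dots> \<le> p / a" using assms by (intro divide_left_mono) auto
  finally show "p * u / (1 + a - u) \<le> p / a" .
qed

lemma estimator_map_error_le:
  fixes p q u a :: real
  assumes p: "0 \<le> p" and q: "0 \<le> q" "q < 1" and a: "0 < a" and u: "\<bar>u - q\<bar> < (1 - q) / 2"
  shows "\<bar>p * u / (1 + a - u) - p * q / (1 - q)\<bar> \<le> 2 * p / (1 - q)\<^sup>2 * (\<bar>u - q\<bar> + q * a)"
proof -
  define D where "D = 1 + a - u"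
  have "u - q < (1 - q) / 2" using u abs_ge_self[of "u - q"] by linarith
  then have D: "(1 - q) / 2 \<le> D" using a by (simp add: D_def)
  have q1: "0 < 1 - q" using q by simp
  have D_pos: "0 < D" using D q1 by (smt (verit) half_gt_zero)
  have "p * u / D - p * q / (1 - q) = p * (u - q - q * a) / (D * (1 - q))"
    using D_pos q1 by (simp add: D_def field_simps)
  then have "\<bar>p * u / D - p * q / (1 - q)\<bar> = p * \<bar>u - q - q * a\<bar> / (D * (1 - q))"
    using D_pos q1 p by (simp add: abs_divide abs_mult)
  also have "\<dots> \<le> p * (\<bar>u - q\<bar> + q * a) / ((1 - q) / 2 * (1 - q))"
  proof (rule frac_le)
    have "\<bar>u - q - q * a\<bar> \<le> \<bar>u - q\<bar> + q * a"
      using q a abs_triangle_ineq4[of "u - q" "q * a"] by simp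
    then show "p * \<bar>u - q - q * a\<bar> \<le> p * (\<bar>u - q\<bar> + q * a)"
      using p by (rule mult_left_mono)
    show "(1 - q) / 2 * (1 - q) \<le> D * (1 - q)"
      using D q1 by (intro mult_right_mono) auto
  qed (use p q a q1 in auto)
  also have "\<dots> = 2 * p / (1 - q)\<^sup>2 * (\<bar>u - q\<bar> + q * a)"
    by (simp add: power2_eq_square)
  finally show ?thesis by (simp add: D_def)
qed

lemma ratio_exp_bigo_inverse_sqrt:
  fixes \<alpha> :: "nat \<Rightarrow> real"
  assumes c: "c > 0" and \<alpha>_pos: "\<And>k. k \<ge> 1 \<Longrightarrow> \<alpha> k > 0"
    and \<alpha>_ln: "(\<lambda>k. ln (real k / \<alpha> k) / real k) \<longlonglongrightarrow> 0"
  shows "(\<lambda>k. real k / \<alpha> k * exp (- c * real k)) \<in> O(\<lambda>k. 1 / sqrt (real k))"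
proof -
  have "eventually (\<lambda>k. ln (real k / \<alpha> k) / real k < c / 2) sequentially"
    by (rule order_tendstoD(2)[OF \<alpha>_ln]) (use c in simp)
  then have "eventually (\<lambda>k. norm (real k / \<alpha> k * exp (- c * real k))
      \<le> 1 * norm (exp (- (c / 2) * real k))) sequentially"
    using eventually_ge_at_top[of 1]
  proof eventually_elim
    case (elim k)
    then have k: "real k > 0" and \<alpha>k: "\<alpha> k > 0" using \<alpha>_pos by auto
    have "real k / \<alpha> k = exp (ln (real k / \<alpha> k))" using k \<alpha>k by simp
    also have "\<dots> \<le> exp (c / 2 * real k)" using elim(1) k by (simp add: field_simps)
    finally have "real k / \<alpha> k * exp (- c * real k) \<le> exp (c / 2 * real k) * exp (- c * real k)"
      by (rule mult_right_mono) simp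
    also have "\<dots> = exp (- (c / 2) * real k)" by (simp flip: exp_add)
    finally show ?case using k \<alpha>k by simp
  qed
  then have "(\<lambda>k. real k / \<alpha> k * exp (- c * real k)) \<in> O(\<lambda>k. exp (- (c / 2) * real k))"
    by (rule bigoI)
  also have "(\<lambda>k. exp (- (c / 2) * real k)) \<in> O(\<lambda>k. 1 / sqrt (real k))"
    using c by real_asymp
  finally show ?thesis .
qed

context page_change_model
begin

definition change_freq :: "nat \<Rightarrow> 'a \<Rightarrow> real" where
  "change_freq k \<omega> = change_count G A k \<omega> / real k"

lemma measurable_change_freq [measurable]: "change_freq k \<in> borel_measurable M"
  unfolding change_freq_def[abs_def] change_count_def by measurable

lemma change_freq_bounds: "k \<ge> 1 \<Longrightarrow> 0 \<le> change_freq k \<omega>" "k \<ge> 1 \<Longrightarrow> change_freq k \<omega> \<le> 1"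
  using change_indicators.average_in_unit_interval[of k \<omega>]
  by (simp_all add: change_freq_def change_count_def)

lemma measurable_lln_est [measurable]: "(\<lambda>\<omega>. lln_est p \<alpha> G A k \<omega>) \<in> borel_measurable M"
  unfolding lln_est_def change_count_def by measurable

lemma lln_est_eq:
  assumes "k \<ge> 1"
  shows "lln_est p \<alpha> G A k \<omega> = p * change_freq k \<omega> / (1 + \<alpha> k / real k - change_freq k \<omega>)"
proof -
  have "1 + \<alpha> k / real k - change_freq k \<omega> = (real k + \<alpha> k - change_count G A k \<omega>) / real k"
    using assms by (simp add: change_freq_def field_simps)
  then show ?thesis using assms by (simp add: lln_est_def change_freq_def)
qed

lemma lln_est_bounds:
  assumes k: "k \<ge> 1" and \<alpha>: "\<alpha> k > 0"
  shows "0 \<le> lln_est p \<alpha> G A k \<omega>" "lln_est p \<alpha> G A k \<omega> \<le> p * (real k / \<alpha> k)"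
  using estimator_map_bounds[of p "change_freq k \<omega>" "\<alpha> k / real k"] change_freq_bounds[OF k] p_pos \<alpha> k
  by (simp_all add: lln_est_eq[OF k])

lemma AE_lln_est_tendsto:
  assumes \<alpha>: "(\<lambda>k. \<alpha> k / real k) \<longlonglongrightarrow> 0"
  shows "AE \<omega> in M. (\<lambda>k. lln_est p \<alpha> G A k \<omega>) \<longlonglongrightarrow> \<Delta>"
  using change_indicators.AE_average_tendsto
proof eventually_elim
  case (elim \<omega>)
  then have "(\<lambda>k. change_freq k \<omega>) \<longlonglongrightarrow> q"
    by (simp add: change_freq_def change_count_def)
  moreover have "1 + 0 - q \<noteq> 0" using q_bounds by simp
  ultimately have "(\<lambda>k. p * change_freq k \<omega> / (1 + \<alpha> k / real k - change_freq k \<omega>)) \<longlonglongrightarrow> p * q / (1 + 0 - q)"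
    by (intro tendsto_intros \<alpha>)
  then have "(\<lambda>k. p * change_freq k \<omega> / (1 + \<alpha> k / real k - change_freq k \<omega>)) \<longlonglongrightarrow> \<Delta>"
    by (simp add: \<Delta>_eq[symmetric])
  moreover have "eventually (\<lambda>k. p * change_freq k \<omega> / (1 + \<alpha> k / real k - change_freq k \<omega>)
      = lln_est p \<alpha> G A k \<omega>) sequentially"
    using eventually_ge_at_top[of 1] by eventually_elim (simp only: lln_est_eq)
  ultimately show ?case by (rule Lim_transform_eventually)
qed

lemma prob_change_freq_far_le:
  assumes k: "k \<ge> 1"
  shows "prob {\<omega>\<in>space M. (1 - q) / 2 \<le> \<bar>change_freq k \<omega> - q\<bar>} \<le> 2 * exp (- ((1 - q)\<^sup>2 / 2) * real k)"
proof -
  have k_pos: "real k > 0" using k by simp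
  have "\<bar>change_count G A k \<omega> - real k * q\<bar> = real k * \<bar>change_freq k \<omega> - q\<bar>" for \<omega>
  proof -
    have "change_count G A k \<omega> - real k * q = real k * (change_freq k \<omega> - q)"
      using k_pos by (simp add: change_freq_def field_simps)
    then show ?thesis using k_pos by (simp add: abs_mult)
  qed
  then have "prob {\<omega>\<in>space M. (1 - q) / 2 \<le> \<bar>change_freq k \<omega> - q\<bar>}
      = prob {\<omega>\<in>space M. real k * ((1 - q) / 2) \<le> \<bar>(\<Sum>j=1..k. change_ind G A j \<omega>) - real k * q\<bar>}"
    using k_pos by (simp add: change_count_def)
  also have "\<dots> \<le> 2 * exp (- 2 * (real k * ((1 - q) / 2))\<^sup>2 / real k)"
    using q_bounds by (intro change_indicators.prob_partial_sum_deviation_le k) simp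
  also have "- 2 * (real k * ((1 - q) / 2))\<^sup>2 / real k = - ((1 - q)\<^sup>2 / 2) * real k"
    using k_pos by (simp add: power2_eq_square field_simps)
  finally show ?thesis .
qed

lemma abs_lln_est_error_le:
  assumes k: "k \<ge> 1" and \<alpha>: "\<alpha> k > 0" and \<omega>: "\<omega> \<in> space M"
  shows "\<bar>lln_est p \<alpha> G A k \<omega> - \<Delta>\<bar> \<le> 2 * p / (1 - q)\<^sup>2 * (\<bar>change_freq k \<omega> - q\<bar> + q * (\<alpha> k / real k))
    + (p * (real k / \<alpha> k) + \<Delta>) * indicator {\<omega>\<in>space M. (1 - q) / 2 \<le> \<bar>change_freq k \<omega> - q\<bar>} \<omega>"
proof -
  define a where "a = \<alpha> k / real k"
  define u where "u = change_freq k \<omega>"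
  have a: "a > 0" using \<alpha> k by (simp add: a_def)
  have lln_est_u: "lln_est p \<alpha> G A k \<omega> = p * u / (1 + a - u)"
    using lln_est_eq[OF k] by (simp add: u_def a_def)
  show ?thesis
  proof (cases "(1 - q) / 2 \<le> \<bar>u - q\<bar>")
    case True
    have "\<bar>lln_est p \<alpha> G A k \<omega> - \<Delta>\<bar> \<le> p * (real k / \<alpha> k) + \<Delta>"
      using lln_est_bounds[of k \<alpha> \<omega>, OF k \<alpha>] \<Delta>_pos p_pos \<alpha> by (auto simp: abs_le_iff)
    moreover have "0 \<le> 2 * p / (1 - q)\<^sup>2 * (\<bar>u - q\<bar> + q * a)" using p_pos q_bounds a by simp
    ultimately show ?thesis using True \<omega> by (simp add: u_def a_def)
  next
    case False
    then show ?thesis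
      using estimator_map_error_le[of p q a u] p_pos q_bounds a \<omega>
      by (simp add: lln_est_u \<Delta>_eq[symmetric] u_def a_def)
  qed
qed

lemma expectation_lln_est_error_le:
  assumes k: "k \<ge> 1" and \<alpha>: "\<alpha> k > 0"
  shows "expectation (\<lambda>\<omega>. \<bar>lln_est p \<alpha> G A k \<omega> - \<Delta>\<bar>)
    \<le> 2 * p / (1 - q)\<^sup>2 * (1 / sqrt (real k) + q * (\<alpha> k / real k))
      + (p * (real k / \<alpha> k) + \<Delta>) * (2 * exp (- ((1 - q)\<^sup>2 / 2) * real k))"
proof -
  define C where "C = 2 * p / (1 - q)\<^sup>2"
  define a where "a = \<alpha> k / real k"
  define B where "B = p * (real k / \<alpha> k) + \<Delta>"
  define Far where "Far = {\<omega>\<in>space M. (1 - q) / 2 \<le> \<bar>change_freq k \<omega> - q\<bar>}"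
  have [measurable]: "Far \<in> events" unfolding Far_def by measurable
  have B: "B \<ge> 0" using p_pos \<Delta>_pos \<alpha> by (simp add: B_def)
  have C: "C \<ge> 0" using p_pos by (simp add: C_def)
  have integrable_dev: "integrable M (\<lambda>\<omega>. \<bar>change_freq k \<omega> - q\<bar>)"
  proof (rule integrable_const_bound[where B=1])
    have "\<bar>change_freq k \<omega> - q\<bar> \<le> 1" for \<omega>
      using change_freq_bounds[OF k, of \<omega>] q_bounds by (auto simp: abs_le_iff)
    then show "AE \<omega> in M. norm \<bar>change_freq k \<omega> - q\<bar> \<le> 1" by simp
  qed measurable
  have integrable_Far: "integrable M (indicator Far :: 'a \<Rightarrow> real)"
    by (rule integrable_real_indicator) (auto simp: emeasure_eq_measure)
  have "\<bar>lln_est p \<alpha> G A k \<omega> - \<Delta>\<bar> \<le> B" for \<omega>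
    using lln_est_bounds[of k \<alpha> \<omega>, OF k \<alpha>] \<Delta>_pos by (auto simp: B_def abs_le_iff)
  then have integrable_error: "integrable M (\<lambda>\<omega>. \<bar>lln_est p \<alpha> G A k \<omega> - \<Delta>\<bar>)"
    by (intro integrable_const_bound[where B=B]) auto
  have "\<bar>lln_est p \<alpha> G A k \<omega> - \<Delta>\<bar> \<le> C * (\<bar>change_freq k \<omega> - q\<bar> + q * a) + B * indicator Far \<omega>"
    if "\<omega> \<in> space M" for \<omega>
    using abs_lln_est_error_le[of k \<alpha>, OF k \<alpha> that] unfolding C_def a_def B_def Far_def .
  then have "expectation (\<lambda>\<omega>. \<bar>lln_est p \<alpha> G A k \<omega> - \<Delta>\<bar>)
      \<le> expectation (\<lambda>\<omega>. C * (\<bar>change_freq k \<omega> - q\<bar> + q * a) + B * indicator Far \<omega>)"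
    using integrable_error integrable_dev integrable_Far by (intro integral_mono) auto
  also have "\<dots> = C * (expectation (\<lambda>\<omega>. \<bar>change_freq k \<omega> - q\<bar>) + q * a) + B * prob Far"
    using integrable_dev integrable_Far by (simp add: prob_space)
  also have "\<dots> \<le> C * (1 / sqrt (real k) + q * a) + B * (2 * exp (- ((1 - q)\<^sup>2 / 2) * real k))"
    using change_indicators.expectation_abs_average_deviation_le[OF k] prob_change_freq_far_le[OF k]
      B C q_bounds
    by (intro add_mono mult_left_mono) (auto simp: Far_def change_freq_def change_count_def)
  finally show ?thesis by (simp only: C_def a_def B_def)
qed

lemma expectation_lln_est_error_bigo:
  assumes \<alpha>_pos: "\<And>k. k \<ge> 1 \<Longrightarrow> \<alpha> k > 0"
    and \<alpha>_ln: "(\<lambda>k. ln (real k / \<alpha> k) / real k) \<longlonglongrightarrow> 0"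
  shows "(\<lambda>k. expectation (\<lambda>\<omega>. \<bar>lln_est p \<alpha> G A k \<omega> - \<Delta>\<bar>))
    \<in> O(\<lambda>k. max (1 / sqrt (real k)) (\<alpha> k / real k))"
proof -
  define c where "c = (1 - q)\<^sup>2 / 2"
  define C where "C = 2 * p / (1 - q)\<^sup>2"
  let ?max = "\<lambda>k. max (1 / sqrt (real k)) (\<alpha> k / real k)"
  let ?bound = "\<lambda>k. C * (1 / sqrt (real k)) + (C * q) * (\<alpha> k / real k)
    + (2 * p) * (real k / \<alpha> k * exp (- c * real k)) + (2 * \<Delta>) * exp (- c * real k)"
  have c: "c > 0" using q_bounds by (simp add: c_def)
  have sqrt_bigo: "(\<lambda>k. 1 / sqrt (real k)) \<in> O(?max)"
    by (intro landau_o.big_mono always_eventually) auto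
  have "eventually (\<lambda>k. norm (\<alpha> k / real k) \<le> norm (?max k)) sequentially"
    using eventually_ge_at_top[of 1]
  proof eventually_elim
    case (elim k)
    then have "norm (\<alpha> k / real k) = \<alpha> k / real k" using \<alpha>_pos[of k] by simp
    also have "\<dots> \<le> ?max k" by (rule max.cobounded2)
    also have "\<dots> \<le> norm (?max k)" unfolding real_norm_def by (rule abs_ge_self)
    finally show ?case .
  qed
  then have \<alpha>_bigo: "(\<lambda>k. \<alpha> k / real k) \<in> O(?max)"
    by (rule landau_o.big_mono)
  have ratio_bigo: "(\<lambda>k. real k / \<alpha> k * exp (- c * real k)) \<in> O(?max)"
    using ratio_exp_bigo_inverse_sqrt[OF c \<alpha>_pos \<alpha>_ln] sqrt_bigo by (rule landau_o.big_trans)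
  have "(\<lambda>k. exp (- c * real k)) \<in> O(\<lambda>k. 1 / sqrt (real k))"
    using c by real_asymp
  then have exp_bigo: "(\<lambda>k. exp (- c * real k)) \<in> O(?max)"
    using sqrt_bigo by (rule landau_o.big_trans)
  have cmult: "(\<lambda>k. a * f k) \<in> O(?max)" if "f \<in> O(?max)" for a f
    using that cmult_in_bigo_iff[of a f] by blast
  have bound_bigo: "?bound \<in> O(?max)"
    by (intro sum_in_bigo cmult[OF sqrt_bigo] cmult[OF \<alpha>_bigo] cmult[OF ratio_bigo] cmult[OF exp_bigo])
  have "eventually (\<lambda>k. norm (expectation (\<lambda>\<omega>. \<bar>lln_est p \<alpha> G A k \<omega> - \<Delta>\<bar>))
      \<le> norm (?bound k)) sequentially"
    using eventually_ge_at_top[of 1]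
  proof eventually_elim
    case (elim k)
    have "expectation (\<lambda>\<omega>. \<bar>lln_est p \<alpha> G A k \<omega> - \<Delta>\<bar>) \<le> ?bound k"
      using expectation_lln_est_error_le[of k \<alpha>, OF elim \<alpha>_pos[OF elim], folded C_def c_def]
      by (simp add: algebra_simps)
    moreover have "0 \<le> expectation (\<lambda>\<omega>. \<bar>lln_est p \<alpha> G A k \<omega> - \<Delta>\<bar>)" by simp
    ultimately show ?case by simp
  qed
  from landau_o.big_mono[OF this] bound_bigo show ?thesis by (rule landau_o.big_trans)
qed

end

theorem theorem1:
  fixes M :: "'a measure" and \<Delta> p :: real and \<alpha> :: "nat \<Rightarrow> real"
    and G A :: "nat \<Rightarrow> 'a \<Rightarrow> real"
  assumes "prob_space M"
    and "\<Delta> > 0" and "p > 0"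
    and "\<And>n. distributed M lborel (G n) (exponential_density \<Delta>)"
    and "\<And>n. distributed M lborel (A n) (exponential_density p)"
    and "prob_space.indep_vars M (\<lambda>_. borel) (\<lambda>i. case i of Inl n \<Rightarrow> G n | Inr n \<Rightarrow> A n) UNIV"
    and "\<And>k. k \<ge> 1 \<Longrightarrow> \<alpha> k > 0"
  shows "((\<lambda>k. \<alpha> k / real k) \<longlonglongrightarrow> 0 \<longrightarrow>
           (AE \<omega> in M. (\<lambda>k. lln_est p \<alpha> G A k \<omega>) \<longlonglongrightarrow> \<Delta>))
       \<and> ((\<lambda>k. \<alpha> k / real k) \<longlonglongrightarrow> 0 \<and> (\<lambda>k. ln (real k / \<alpha> k) / real k) \<longlonglongrightarrow> 0 \<longrightarrow>
           (\<lambda>k. prob_space.expectation M (\<lambda>\<omega>. \<bar>lln_est p \<alpha> G A k \<omega> - \<Delta>\<bar>))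
             \<in> O(\<lambda>k. max (1 / sqrt (real k)) (\<alpha> k / real k)))"
proof -
  interpret page_change_model M \<Delta> p G A
    using assms(1-6) by (simp add: page_change_model_def page_change_model_axioms_def)
  show ?thesis
    using AE_lln_est_tendsto expectation_lln_est_error_bigo assms(7) by blast
qed

end
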